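(* Let $\mathbf{Z}\in\mathbb{R}^{n\times m}$ with $\boldsymbol\Sigma=\mathbf{Z}^\top\mathbf{Z}$ invertible, and let $\tilde{\mathbf{Z}}$ be a GKnockoff matrix of $\mathbf{Z}$, i.e. $\tilde{\mathbf{Z}}=\mathbf{Z}(\mathbf{I}-\boldsymbol\Sigma^{-1}\operatorname{diag}\{\mathbf{s}\})+\tilde{\mathbf{U}}\mathbf{C}$ where $\mathbf{s}\in\mathbb{R}^m_+$, $\tilde{\mathbf{U}}$ lies in the null space of $\mathbf{Z}$ (i.e. $\mathbf{Z}^\top\tilde{\mathbf{U}}=\mathbf{0}$) and $\mathbf{C}$ is the Cholesky factor of $2\operatorname{diag}\{\mathbf{s}\}-\operatorname{diag}\{\mathbf{s}\}\boldsymbol\Sigma^{-1}\operatorname{diag}\{\mathbf{s}\}$. If $\mathbf{M}\in\mathbb{R}^{n\times n}$ is symmetric with $\mathbf{M}\mathbf{Z}=\mathbf{Z}$, then $\tilde{\mathbf{Z}}^M=\mathbf{M}\tilde{\mathbf{Z}}$ is also a GKnockoff matrix of $\mathbf{Z}$ (of the same form, with $\tilde{\mathbf{U}}$ replaced by $\mathbf{M}\tilde{\mathbf{U}}$, which lies in the null space of $\mathbf{Z}$). *)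

theory Defs
  imports "HOL-Analysis.Analysis"
begin

definition diag_vec :: "real ^ 'm \<Rightarrow> real ^ 'm ^ 'm" where
  "diag_vec s = (\<chi> i j. if i = j then s $ i else 0)"

definition upper_triangular :: "('a::zero) ^ 'm ^ 'm \<Rightarrow> bool" where
  "upper_triangular C \<longleftrightarrow> (\<forall>i j. to_nat j < to_nat i \<longrightarrow> C $ i $ j = 0)"

definition cholesky_factor :: "real ^ 'm ^ 'm \<Rightarrow> real ^ 'm ^ 'm \<Rightarrow> bool" where
  "cholesky_factor C A \<longleftrightarrow> upper_triangular C \<and> (\<forall>i. C $ i $ i \<ge> 0) \<and> transpose C ** C = A"

definition gknockoff_form ::
  "real ^ 'm ^ 'n \<Rightarrow> real ^ 'm \<Rightarrow> real ^ 'm ^ 'n \<Rightarrow> real ^ 'm ^ 'm \<Rightarrow> real ^ 'm ^ 'n \<Rightarrow> bool" where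
  "gknockoff_form Z s U C Zt \<longleftrightarrow>
     (let \<Sigma> = transpose Z ** Z; D = diag_vec s in
       (\<forall>i. s $ i \<ge> 0) \<and> transpose Z ** U = 0 \<and>
       cholesky_factor C (2 *\<^sub>R D - D ** matrix_inv \<Sigma> ** D) \<and>
       Zt = Z ** (mat 1 - matrix_inv \<Sigma> ** D) + U ** C)"

definition is_gknockoff :: "real ^ 'm ^ 'n \<Rightarrow> real ^ 'm ^ 'n \<Rightarrow> bool" where
  "is_gknockoff Z Zt \<longleftrightarrow> (\<exists>s U C. gknockoff_form Z s U C Zt)"

end

theory Submission
  imports Defs
begin

text \<open>Left multiplication by a symmetric M with M Z = Z fixes the Z-part of a knockoff and
  maps the null space of Z^T into itself, since Z^T M = (M Z)^T = Z^T; so only U changes.\<close>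

lemma transpose_mul_symmetric_fixing:
  fixes M :: "'a::comm_semiring_1 ^ 'n ^ 'n" and Z :: "'a ^ 'm ^ 'n"
  assumes "transpose M = M" and "M ** Z = Z"
  shows "transpose Z ** M = transpose Z"
  by (metis assms matrix_transpose_mul)

lemma left_null_space_mult_closed:
  fixes Z U :: "'a::semiring_1 ^ 'm ^ 'n" and M :: "'a ^ 'n ^ 'n"
  assumes "transpose Z ** M = transpose Z" and "transpose Z ** U = 0"
  shows "transpose Z ** (M ** U) = 0"
  by (metis assms matrix_mul_assoc)

lemma gknockoff_form_mult_left:
  fixes Z Zt U :: "real ^ 'm ^ 'n" and M :: "real ^ 'n ^ 'n"
  assumes form: "gknockoff_form Z s U C Zt"
    and fix_Z: "M ** Z = Z"
    and null_MU: "transpose Z ** (M ** U) = 0"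
  shows "gknockoff_form Z s (M ** U) C (M ** Zt)"
proof -
  let ?K = "mat 1 - matrix_inv (transpose Z ** Z) ** diag_vec s"
  have "Zt = Z ** ?K + U ** C"
    using form by (simp add: gknockoff_form_def Let_def)
  then have "M ** Zt = Z ** ?K + (M ** U) ** C"
    by (simp add: matrix_add_ldistrib matrix_mul_assoc fix_Z)
  with form null_MU show ?thesis
    by (simp add: gknockoff_form_def Let_def)
qed

theorem lemmaS1:
  fixes Z Zt U :: "real ^ 'm ^ 'n" and s :: "real ^ 'm" and C :: "real ^ 'm ^ 'm"
    and M :: "real ^ 'n ^ 'n"
  assumes "invertible (transpose Z ** Z)"
    and "gknockoff_form Z s U C Zt"
    and "transpose M = M"
    and "M ** Z = Z"
  shows "transpose Z ** (M ** U) = 0 \<and> gknockoff_form Z s (M ** U) C (M ** Zt)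
         \<and> is_gknockoff Z (M ** Zt)"
proof -
  have "transpose Z ** U = 0"
    using assms(2) by (simp add: gknockoff_form_def Let_def)
  then have null_MU: "transpose Z ** (M ** U) = 0"
    using left_null_space_mult_closed transpose_mul_symmetric_fixing assms(3,4) by blast
  moreover have form: "gknockoff_form Z s (M ** U) C (M ** Zt)"
    using gknockoff_form_mult_left assms(2,4) null_MU .
  moreover have "is_gknockoff Z (M ** Zt)"
    using form is_gknockoff_def by blast
  ultimately show ?thesis by blast
qed

end
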